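(* Let $k\in\{1,\dots,n\}$. Let $S_0=\emptyset$ and, for $t=1,\dots,k$, let $S_t=S_{t-1}\cup\{u_t\}$ where $u_t\in\arg\max_{u\in V\setminus S_{t-1}}\big(r(S_{t-1}\cup\{u\})-r(S_{t-1})\big)$ (ties broken arbitrarily). Then $$r(S_k)\;\ge\;\Big(1-\frac1e\Big)\max_{S\subseteq V,\;|S|=k} r(S).$$
   Context: Let $G=(V,E)$ be a finite tree with $|V|=n$, rooted at a node $s$ (the infection source). For a node $i$: $d_i$ is its depth (number of edges on the path from $s$ to $i$); $A_i$ is the set of ancestors of $i$ (strict, including its parent); $N_i$ is the set of descendants of $i$ (strict, not including $i$); $n_i=|N_i|$. Each edge $e$ carries an independent random variable $X_e\sim\mathrm{Exp}(\lambda)$ with $\lambda>0$, and $Z_i=\sum_{e \text{ on the path from } s \text{ to } i}X_e$ is the infection time of $i$ (so $Z_s=0$; $Z_i$ is a sum of $d_i$ i.i.d. $\mathrm{Exp}(\lambda)$ variables). The immunization time $\tau\ge 0$ is a single random variable, common to all vaccinated nodes and independent of $(X_e)_{e\in E}$. For $S\subseteq V$ (the vaccinated set), a node $i\in S$ becomes immune iff $Z_i>\tau$, and an immune node saves all its descendants. The expected total reward is defined as $r(S)=\mathbb{E}\big[\,\big|\bigcup_{i\in S:\,Z_i>\tau}N_i\big|\,\big]$, the expected number of nodes that are descendants of at least one immune vaccinated node. *)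

theory Defs
  imports "HOL-Probability.Probability"
begin

text \<open>A finite tree rooted at s, given by a parent map par (the edge of a non-root
node v is the edge (par v, v)). Every node of V reaches the root by following parents.\<close>
definition rooted_tree :: "'a set \<Rightarrow> 'a \<Rightarrow> ('a \<Rightarrow> 'a) \<Rightarrow> bool" where
  "rooted_tree V s par \<longleftrightarrow> finite V \<and> s \<in> V \<and> (\<forall>v\<in>V - {s}. par v \<in> V)
     \<and> (\<forall>v\<in>V. \<exists>m. (par ^^ m) v = s)"

definition depth :: "'a \<Rightarrow> ('a \<Rightarrow> 'a) \<Rightarrow> 'a \<Rightarrow> nat" where
  "depth s par i = (LEAST m. (par ^^ m) i = s)"

definition ancestors :: "'a \<Rightarrow> ('a \<Rightarrow> 'a) \<Rightarrow> 'a \<Rightarrow> 'a set" where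
  "ancestors s par i = {(par ^^ m) i | m. 1 \<le> m \<and> m \<le> depth s par i}"

definition descendants :: "'a set \<Rightarrow> 'a \<Rightarrow> ('a \<Rightarrow> 'a) \<Rightarrow> 'a \<Rightarrow> 'a set" where
  "descendants V s par i = {j \<in> V. i \<in> ancestors s par j}"

text \<open>infection time Z_i: sum of the edge variables on the path from s to i;
the edges on that path are indexed by the non-root nodes among i and its ancestors\<close>
definition infection_time :: "'a \<Rightarrow> ('a \<Rightarrow> 'a) \<Rightarrow> ('a \<Rightarrow> real) \<Rightarrow> 'a \<Rightarrow> real" where
  "infection_time s par X i = (\<Sum>j \<in> insert i (ancestors s par i) - {s}. X j)"

definition edge_space :: "'a set \<Rightarrow> 'a \<Rightarrow> real \<Rightarrow> ('a \<Rightarrow> real) measure" where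
  "edge_space V s lam = PiM (V - {s}) (\<lambda>_. density lborel (exponential_density lam))"

text \<open>expected total reward r(S); T is the distribution of the immunization time tau,
taken independent of the edge variables (product measure)\<close>
definition reward :: "'a set \<Rightarrow> 'a \<Rightarrow> ('a \<Rightarrow> 'a) \<Rightarrow> real \<Rightarrow> real measure \<Rightarrow> 'a set \<Rightarrow> real" where
  "reward V s par lam T S =
     (\<integral>\<omega>. real (card (\<Union>i \<in> {i \<in> S. snd \<omega> < infection_time s par (fst \<omega>) i}.
                              descendants V s par i))
      \<partial>(edge_space V s lam \<Otimes>\<^sub>M T))"

end

theory Submission
  imports Defs
begin

text \<open>Pointwise in the randomness, the number of saved nodes is a coverage function of the
vaccinated set: immune nodes cover their descendants. Coverage functions are monotone and
submodular, and taking expectations preserves both properties. For any monotone submodular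
set function with nonnegative value on the empty set, the greedy choice closes at least a
fraction 1/k of the remaining gap to an optimal k-set at each step, so after k steps the gap
is at most (1 - 1/k)^k \<le> 1/e of the optimum.\<close>

lemma card_Un_UN_le_sum_increments:
  assumes "finite X" "finite A" "\<And>v. v \<in> A \<Longrightarrow> finite (Y v)"
  shows "real (card (X \<union> (\<Union>v\<in>A. Y v)))
           \<le> real (card X) + (\<Sum>v\<in>A. real (card (X \<union> Y v)) - real (card X))"
proof -
  have increment: "real (card (X \<union> W)) = real (card X) + real (card (W - X))" if "finite W" for W
    using card_Un_disjoint[of X "W - X"] assms(1) that by (simp add: Un_Diff_cancel)
  have "card ((\<Union>v\<in>A. Y v) - X) = card (\<Union>v\<in>A. Y v - X)"
    by (rule arg_cong[where f = card]) blast
  also have "\<dots> \<le> (\<Sum>v\<in>A. card (Y v - X))"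
    using card_UN_le[OF assms(2)] .
  finally have "real (card ((\<Union>v\<in>A. Y v) - X)) \<le> (\<Sum>v\<in>A. real (card (Y v - X)))"
    by (metis of_nat_le_iff of_nat_sum)
  then show ?thesis
    using assms by (simp add: increment)
qed

lemma card_covered_mono:
  assumes "finite V" "\<And>i. D i \<subseteq> V" "S \<subseteq> S'"
  shows "card (\<Union>i\<in>{i\<in>S. P i}. D i) \<le> card (\<Union>i\<in>{i\<in>S'. P i}. D i)"
  by (rule card_mono) (use assms in \<open>auto intro: finite_subset\<close>)

lemma card_covered_submodular:
  assumes "finite V" "\<And>i. D i \<subseteq> V" "finite A"
  shows "real (card (\<Union>i\<in>{i\<in>G \<union> A. P i}. D i)) \<le> real (card (\<Union>i\<in>{i\<in>G. P i}. D i))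
     + (\<Sum>v\<in>A. real (card (\<Union>i\<in>{i\<in>insert v G. P i}. D i)) - real (card (\<Union>i\<in>{i\<in>G. P i}. D i)))"
proof -
  define X where "X = (\<Union>i\<in>{i\<in>G. P i}. D i)"
  define Y where "Y v = (if P v then D v else {})" for v
  have fin: "finite X" "finite (Y v)" for v
    using assms(1,2) by (auto simp: X_def Y_def intro: finite_subset)
  have "(\<Union>i\<in>{i\<in>G \<union> A. P i}. D i) = X \<union> (\<Union>v\<in>A. Y v)"
    and "(\<Union>i\<in>{i\<in>insert v G. P i}. D i) = X \<union> Y v" for v
    by (auto simp: X_def Y_def split: if_splits)
  then show ?thesis
    using card_Un_UN_le_sum_increments[OF fin(1) assms(3) fin(2)] by (simp add: X_def)
qed

lemma greedy_gap_le:
  fixes f :: "'a set \<Rightarrow> real"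
  assumes mono: "\<And>A B. A \<subseteq> B \<Longrightarrow> B \<subseteq> V \<Longrightarrow> f A \<le> f B"
    and submod: "\<And>G A. G \<subseteq> V \<Longrightarrow> A \<subseteq> V \<Longrightarrow> f (G \<union> A) \<le> f G + (\<Sum>v\<in>A. f (insert v G) - f G)"
    and G: "G \<subseteq> V" and S: "S \<subseteq> V" "finite S"
    and best: "u \<in> V - G" "\<And>v. v \<in> V - G \<Longrightarrow> f (insert v G) - f G \<le> f (insert u G) - f G"
  shows "f S - f G \<le> real (card S) * (f (insert u G) - f G)"
proof -
  have gain_nonneg: "0 \<le> f (insert u G) - f G"
    using mono[of G "insert u G"] G best(1) by auto
  have "f S \<le> f (G \<union> (S - G))"
    using mono S G by auto
  also have "\<dots> \<le> f G + (\<Sum>v\<in>S - G. f (insert v G) - f G)"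
    using submod[of G "S - G"] G S by (simp add: Un_Diff_cancel) blast
  also have "\<dots> \<le> f G + (\<Sum>v\<in>S - G. f (insert u G) - f G)"
    using best(2) S by (intro add_left_mono sum_mono) auto
  also have "\<dots> \<le> f G + real (card S) * (f (insert u G) - f G)"
    using card_mono[OF S(2), of "S - G"] gain_nonneg by (auto intro!: mult_right_mono)
  finally show ?thesis by simp
qed

theorem greedy_approximation:
  fixes f :: "'a set \<Rightarrow> real" and u :: "nat \<Rightarrow> 'a"
  assumes mono: "\<And>A B. A \<subseteq> B \<Longrightarrow> B \<subseteq> V \<Longrightarrow> f A \<le> f B"
    and submod: "\<And>G A. G \<subseteq> V \<Longrightarrow> A \<subseteq> V \<Longrightarrow> f (G \<union> A) \<le> f G + (\<Sum>v\<in>A. f (insert v G) - f G)"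
    and empty: "0 \<le> f {}"
    and S: "S \<subseteq> V" "card S = k" "1 \<le> k"
    and greedy: "\<forall>t\<in>{1..k}. u t \<in> V - u ` {1..<t} \<and>
        (\<forall>v \<in> V - u ` {1..<t}. f (insert v (u ` {1..<t})) - f (u ` {1..<t})
                               \<le> f (insert (u t) (u ` {1..<t})) - f (u ` {1..<t}))"
  shows "(1 - 1 / exp 1) * f S \<le> f (u ` {1..k})"
proof -
  define G where "G m = u ` {1..m}" for m
  have G_Suc: "G (Suc m) = insert (u (Suc m)) (G m)" and G_less: "u ` {1..<Suc m} = G m" for m
    by (auto simp: G_def atLeastAtMostSuc_conv atLeastLessThanSuc_atLeastAtMost)
  have G_sub: "G m \<subseteq> V" if "m \<le> k" for m
    using greedy that by (auto simp: G_def)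
  have "finite S"
    using S card.infinite by fastforce
  have "f S \<ge> 0"
    using mono[of "{}" S] S empty by simp
  have contraction: "f S - f (G (Suc m)) \<le> (1 - 1 / k) * (f S - f (G m))" if "m < k" for m
  proof -
    have "Suc m \<in> {1..k}"
      using that by simp
    then have "u (Suc m) \<in> V - G m"
      and "\<And>v. v \<in> V - G m \<Longrightarrow> f (insert v (G m)) - f (G m) \<le> f (insert (u (Suc m)) (G m)) - f (G m)"
      using greedy[rule_format, of "Suc m"] unfolding G_less by blast+
    then have "f S - f (G m) \<le> k * (f (G (Suc m)) - f (G m))"
      using greedy_gap_le[OF mono submod G_sub S(1) \<open>finite S\<close>] that S(2) by (simp add: G_Suc)
    then show ?thesis
      using S by (simp add: field_simps)
  qed
  have gap: "f S - f (G m) \<le> (1 - 1 / k) ^ m * f S" if "m \<le> k" for m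
    using that
  proof (induction m)
    case 0
    then show ?case using empty by (simp add: G_def)
  next
    case (Suc m)
    have "f S - f (G (Suc m)) \<le> (1 - 1 / k) * (f S - f (G m))"
      using contraction Suc.prems by simp
    also have "\<dots> \<le> (1 - 1 / k) * ((1 - 1 / k) ^ m * f S)"
      using Suc S(3) by (intro mult_left_mono) simp_all
    finally show ?case
      by simp
  qed
  have "(1 - 1 / k) ^ k \<le> 1 / exp 1"
    using exp_ge_one_minus_x_over_n_power_n[of 1 k] S by (simp add: exp_minus inverse_eq_divide)
  then have "(1 - 1 / k) ^ k * f S \<le> 1 / exp 1 * f S"
    using \<open>f S \<ge> 0\<close> by (rule mult_right_mono)
  with gap[OF order_refl] have "f S - f (G k) \<le> 1 / exp 1 * f S"
    by (rule order_trans)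
  then show ?thesis
    unfolding G_def by (simp add: left_diff_distrib)
qed

lemma measurable_component_PiM_borel:
  assumes "sets N = sets borel"
  shows "(\<lambda>x. x j) \<in> borel_measurable (PiM I (\<lambda>_. N))"
proof (cases "j \<in> I")
  case True
  have "(\<lambda>x. x j) \<in> measurable (PiM I (\<lambda>_. N)) N"
    using True by (rule measurable_component_singleton)
  then show ?thesis
    unfolding measurable_cong_sets[OF refl assms] .
next
  case False
  have "(\<lambda>_. undefined) \<in> borel_measurable (PiM I (\<lambda>_. N))"
    by simp
  then show ?thesis
    by (rule measurable_cong[THEN iffD1, rotated])
       (use False in \<open>auto simp: space_PiM PiE_def extensional_def\<close>)
qed

locale infection_model =
  fixes V :: "'a set" and s :: 'a and par :: "'a \<Rightarrow> 'a" and lam :: real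
    and T :: "real measure"
  assumes finite_V: "finite V" and lam_pos: "0 < lam"
    and prob_space_T: "prob_space T" and sets_T: "sets T = sets borel"
begin

abbreviation outcomes :: "(('a \<Rightarrow> real) \<times> real) measure" where
  "outcomes \<equiv> edge_space V s lam \<Otimes>\<^sub>M T"

definition saved :: "'a set \<Rightarrow> ('a \<Rightarrow> real) \<times> real \<Rightarrow> real" where
  "saved S \<omega> = real (card (\<Union>i \<in> {i \<in> S. snd \<omega> < infection_time s par (fst \<omega>) i}.
                              descendants V s par i))"

lemma reward_eq_integral: "reward V s par lam T S = integral\<^sup>L outcomes (saved S)"
  unfolding reward_def saved_def ..

lemma descendants_subset: "descendants V s par i \<subseteq> V"
  by (auto simp: descendants_def)

lemma prob_space_outcomes: "prob_space outcomes"
  unfolding edge_space_def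
  by (intro prob_space_pair prob_space_PiM prob_space_exponential_density lam_pos prob_space_T)

lemma saved_measurable:
  assumes "finite S"
  shows "saved S \<in> borel_measurable outcomes"
proof -
  have [measurable]: "snd \<in> borel_measurable outcomes"
    using sets_T by (metis measurable_snd measurable_cong_sets sets_pair_measure_cong)
  have [measurable]: "(\<lambda>x. x j) \<in> borel_measurable
                        (PiM (V - {s}) (\<lambda>_. density lborel (exponential_density lam)))" for j
    by (rule measurable_component_PiM_borel) simp
  have [measurable]: "(\<lambda>\<omega>. infection_time s par (fst \<omega>) i) \<in> borel_measurable outcomes" for i
    unfolding infection_time_def edge_space_def by measurable
  have indicator_sum: "saved S = (\<lambda>\<omega>. \<Sum>j\<in>V. of_bool (\<exists>i\<in>S. snd \<omega> < infection_time s par (fst \<omega>) i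
                                                \<and> j \<in> descendants V s par i))"
  proof
    fix \<omega>
    have covered_eq: "(\<Union>i \<in> {i \<in> S. snd \<omega> < infection_time s par (fst \<omega>) i}. descendants V s par i)
            = V \<inter> {j. \<exists>i\<in>S. snd \<omega> < infection_time s par (fst \<omega>) i \<and> j \<in> descendants V s par i}"
      by (auto simp: descendants_def)
    show "saved S \<omega> = (\<Sum>j\<in>V. of_bool (\<exists>i\<in>S. snd \<omega> < infection_time s par (fst \<omega>) i
                                                \<and> j \<in> descendants V s par i))"
      unfolding saved_def covered_eq using finite_V by simp
  qed
  show ?thesis
    unfolding indicator_sum of_bool_def using assms by measurable
qed

lemma integrable_saved:
  assumes "S \<subseteq> V"
  shows "integrable outcomes (saved S)"
proof (rule finite_measure.integrable_const_bound[where B = "real (card V)"])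
  show "finite_measure outcomes"
    using prob_space_outcomes by (rule prob_space.finite_measure)
  show "AE \<omega> in outcomes. norm (saved S \<omega>) \<le> real (card V)"
    using finite_V by (auto simp: saved_def descendants_def intro!: card_mono)
  show "saved S \<in> borel_measurable outcomes"
    using assms finite_V by (intro saved_measurable) (rule finite_subset)
qed

lemma reward_nonneg: "0 \<le> reward V s par lam T S"
  unfolding reward_eq_integral by (rule integral_nonneg_AE) (simp add: saved_def)

lemma reward_mono:
  assumes "S \<subseteq> S'" "S' \<subseteq> V"
  shows "reward V s par lam T S \<le> reward V s par lam T S'"
  unfolding reward_eq_integral
  using assms
  by (intro integral_mono integrable_saved)
     (auto simp: saved_def intro!: card_covered_mono[OF finite_V descendants_subset])

lemma reward_submodular:
  assumes "G \<subseteq> V" "A \<subseteq> V"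
  shows "reward V s par lam T (G \<union> A)
           \<le> reward V s par lam T G + (\<Sum>v\<in>A. reward V s par lam T (insert v G) - reward V s par lam T G)"
proof -
  have "finite A"
    using assms(2) finite_V by (rule finite_subset)
  have integrable_gain: "integrable outcomes (\<lambda>\<omega>. saved (insert v G) \<omega> - saved G \<omega>)" if "v \<in> A" for v
    using that assms by (intro Bochner_Integration.integrable_diff integrable_saved) auto
  have integral_gain: "(LINT \<omega>|outcomes. saved (insert v G) \<omega> - saved G \<omega>)
      = integral\<^sup>L outcomes (saved (insert v G)) - integral\<^sup>L outcomes (saved G)" if "v \<in> A" for v
    using that assms by (intro Bochner_Integration.integral_diff integrable_saved) auto
  have pointwise: "saved (G \<union> A) \<omega> \<le> saved G \<omega> + (\<Sum>v\<in>A. saved (insert v G) \<omega> - saved G \<omega>)" for \<omega>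
    unfolding saved_def by (rule card_covered_submodular[OF finite_V descendants_subset \<open>finite A\<close>])
  have "integral\<^sup>L outcomes (saved (G \<union> A))
          \<le> integral\<^sup>L outcomes (\<lambda>\<omega>. saved G \<omega> + (\<Sum>v\<in>A. saved (insert v G) \<omega> - saved G \<omega>))"
    using assms integrable_gain
    by (intro integral_mono integrable_saved Bochner_Integration.integrable_add
          Bochner_Integration.integrable_sum)
       (auto intro!: pointwise)
  also have "\<dots> = integral\<^sup>L outcomes (saved G)
                   + (\<Sum>v\<in>A. integral\<^sup>L outcomes (saved (insert v G)) - integral\<^sup>L outcomes (saved G))"
    using assms integrable_gain integral_gain
    by (subst Bochner_Integration.integral_add)
       (auto intro!: integrable_saved Bochner_Integration.integrable_sum sum.cong
         simp: Bochner_Integration.integral_sum)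
  finally show ?thesis
    unfolding reward_eq_integral .
qed

end

theorem mainTheorem5:
  fixes V :: "'a set" and s :: 'a and par :: "'a \<Rightarrow> 'a" and lam :: real
    and T :: "real measure" and k :: nat and u :: "nat \<Rightarrow> 'a"
  assumes tree: "rooted_tree V s par"
    and lam: "lam > 0"
    and T_prob: "prob_space T" and T_sets: "sets T = sets borel"
    and tau_nonneg: "AE t in T. 0 \<le> t"
    and k: "1 \<le> k" "k \<le> card V"
    and greedy: "\<forall>t\<in>{1..k}. u t \<in> V - u ` {1..<t} \<and>
        (\<forall>v \<in> V - u ` {1..<t}.
           reward V s par lam T (insert v (u ` {1..<t})) - reward V s par lam T (u ` {1..<t})
           \<le> reward V s par lam T (insert (u t) (u ` {1..<t})) - reward V s par lam T (u ` {1..<t}))"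
  shows "reward V s par lam T (u ` {1..k})
         \<ge> (1 - 1 / exp 1) * Max {reward V s par lam T S | S. S \<subseteq> V \<and> card S = k}"
proof -
  interpret infection_model V s par lam T
    using tree lam T_prob T_sets by (intro infection_model.intro) (simp_all add: rooted_tree_def)
  let ?values = "{reward V s par lam T S | S. S \<subseteq> V \<and> card S = k}"
  have "finite ?values"
    using finite_V by (intro finite_image_set) simp
  moreover obtain S0 where "S0 \<subseteq> V" "card S0 = k"
    using k obtain_subset_with_card_n by metis
  then have "?values \<noteq> {}"
    by blast
  ultimately have "Max ?values \<in> ?values"
    by (rule Max_in)
  then obtain S where S: "S \<subseteq> V" "card S = k" and "Max ?values = reward V s par lam T S"
    by blast
  then show ?thesis
    using greedy_approximation[OF reward_mono reward_submodular reward_nonneg S k(1) greedy]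
    by simp
qed

end
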